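(* Let $(\mathcal{F}_\alpha)_{\alpha<\omega_1}$ and $(\mathcal{G}_\alpha)_{\alpha<\omega_1}$ be transfinite families defined by two approximating families. Let $\mathcal{A}\subset[\mathbb{N}]^{<\infty}$ be hereditary, $P\subset\mathbb{N}$ infinite and $\alpha<\omega_1$. Then $\mathcal{A}$ is $\alpha$-large on $P$ with respect to $(\mathcal{F}_\beta)$ if and only if $\mathcal{A}$ is $\alpha$-large on $P$ with respect to $(\mathcal{G}_\beta)$.
   Context: An approximating family assigns to each countable limit ordinal $\alpha$ finite sets $A_n(\alpha)\subset[0,\alpha)$, $n\in\mathbb{N}$, with $A_n(\alpha)\subset A_{n+1}(\alpha)$ and $\lim_n\max A_n(\alpha)=\alpha$. The associated transfinite family: $\mathcal{F}_0=\{\emptyset\}$; $\mathcal{F}_{\beta+1}=\{\{n\}\cup E:n\in\mathbb{N},E\in\mathcal{F}_\beta\}\cup\{\emptyset\}$; for limit $\alpha$, $\mathcal{F}_\alpha=\{\emptyset\}\cup\{E\ne\emptyset:E\in\bigcup_{\beta\in A_{\min E}(\alpha)}\mathcal{F}_\beta\}$. For $N=\{n_1<n_2<\dots\}$, $\mathcal{F}^N=\{\{n_i:i\in E\}:E\in\mathcal{F}\}$. $\mathcal{A}$ is $\alpha$-large on $P$ with respect to $(\mathcal{F}_\beta)$ if for every infinite $M\subset P$ there is an infinite $N\subset M$ with $\mathcal{F}_\alpha^N\subset\mathcal{A}$. $[\mathbb{N}]^{<\infty}$ = finite subsets of $\mathbb{N}$; hereditary = closed under subsets. *)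

theory Defs
  imports "HOL-Library.Countable_Set"
begin

text \<open>Countable ordinals are modelled by an arbitrary well-ordered type 'o in which
every element has only countably many predecessors (an initial segment of omega_1).
The natural numbers N are modelled by nat (starting at 0).\<close>

definition is_succ_of :: "'o::wellorder \<Rightarrow> 'o \<Rightarrow> bool" where
  "is_succ_of \<beta> \<alpha> \<longleftrightarrow> \<beta> < \<alpha> \<and> (\<forall>\<gamma>. \<beta> < \<gamma> \<longrightarrow> \<alpha> \<le> \<gamma>)"

definition is_limit :: "'o::wellorder \<Rightarrow> bool" where
  "is_limit \<alpha> \<longleftrightarrow> (\<exists>\<beta>. \<beta> < \<alpha>) \<and> \<not> (\<exists>\<beta>. is_succ_of \<beta> \<alpha>)"

definition approximating_family :: "('o::wellorder \<Rightarrow> nat \<Rightarrow> 'o set) \<Rightarrow> bool" where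
  "approximating_family A \<longleftrightarrow>
     (\<forall>\<alpha>. is_limit \<alpha> \<longrightarrow>
        (\<forall>n. finite (A \<alpha> n) \<and> A \<alpha> n \<noteq> {} \<and> A \<alpha> n \<subseteq> {..<\<alpha>} \<and> A \<alpha> n \<subseteq> A \<alpha> (Suc n)) \<and>
        (\<forall>\<beta><\<alpha>. \<exists>n0. \<forall>n\<ge>n0. \<beta> < Max (A \<alpha> n)))"

definition transfinite_family :: "('o::wellorder \<Rightarrow> nat \<Rightarrow> 'o set) \<Rightarrow> 'o \<Rightarrow> nat set set" where
  "transfinite_family A = wfrec {(x, y). x < y}
     (\<lambda>F \<alpha>. if \<not> (\<exists>\<beta>. \<beta> < \<alpha>) then {{}}
            else if (\<exists>\<beta>. is_succ_of \<beta> \<alpha>)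
              then {insert n E | n E. E \<in> F (THE \<beta>. is_succ_of \<beta> \<alpha>)} \<union> {{}}
            else {{}} \<union> {E. E \<noteq> {} \<and> E \<in> (\<Union>\<beta>\<in>A \<alpha> (Min E). F \<beta>)})"

definition spread :: "nat set \<Rightarrow> nat set set \<Rightarrow> nat set set" where
  "spread N \<F> = (\<lambda>E. enumerate N ` E) ` \<F>"

definition large :: "('o::wellorder \<Rightarrow> nat set set) \<Rightarrow> 'o \<Rightarrow> nat set \<Rightarrow> nat set set \<Rightarrow> bool" where
  "large \<F> \<alpha> P \<A> \<longleftrightarrow>
     (\<forall>M. M \<subseteq> P \<and> infinite M \<longrightarrow> (\<exists>N. N \<subseteq> M \<and> infinite N \<and> spread N (\<F> \<alpha>) \<subseteq> \<A>))"

definition hereditary :: "nat set set \<Rightarrow> bool" where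
  "hereditary \<A> \<longleftrightarrow> (\<forall>E\<in>\<A>. \<forall>E'. E' \<subseteq> E \<longrightarrow> E' \<in> \<A>)"

end

theory Submission
  imports Defs
begin

text \<open>Write \<open>\<F>\<close> and \<open>\<G>\<close> for the transfinite families of \<open>A\<close> and \<open>B\<close>.
  For \<open>\<beta> \<le> \<gamma>\<close> there is a threshold \<open>g :: nat \<Rightarrow> nat\<close> such that \<open>f ` E \<in> \<F> \<gamma>\<close> whenever \<open>E \<in> \<G> \<beta>\<close> and \<open>f \<ge> g\<close>
  on \<open>E\<close>. This goes by transfinite induction on \<open>\<gamma>\<close>. Successor steps are immediate, since a
  successor family adds an arbitrary point (so \<open>f\<close> need not be injective). At a limit \<open>\<gamma>\<close>,
  a set of \<open>\<G> \<delta>\<close> with \<open>\<delta> < \<gamma>\<close> is first pushed into \<open>\<F> \<epsilon>\<close> for some \<open>\<epsilon> \<in> A \<gamma> n\<close> above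
  \<open>\<delta>\<close>; raising the threshold to \<open>n\<close> forces \<open>\<epsilon> \<in> A \<gamma> (Min (f ` E))\<close>. For \<open>\<G> \<gamma>\<close> itself
  one diagonalises: \<open>g x\<close> is the largest threshold \<open>g\<^sub>\<delta> x\<close> with \<open>\<delta> \<in> B \<gamma> x\<close>.
  Finally, if \<open>spread N (\<F> \<alpha>) \<subseteq> \<A>\<close> and \<open>h \<ge> g\<close> is strictly increasing, then
  \<open>spread N' (\<G> \<alpha>) \<subseteq> \<A>\<close> for the subsequence \<open>N' = enumerate N ` range h\<close> of \<open>N\<close>.\<close>

lemma is_succ_of_unique: "is_succ_of \<beta> \<alpha> \<Longrightarrow> is_succ_of \<gamma> \<alpha> \<Longrightarrow> \<beta> = \<gamma>"
  unfolding is_succ_of_def by (meson leD linorder_neqE)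

lemma the_succ_of: "is_succ_of \<beta> \<alpha> \<Longrightarrow> (THE \<beta>. is_succ_of \<beta> \<alpha>) = \<beta>"
  using is_succ_of_unique by blast

lemma ordinal_cases:
  fixes \<alpha> :: "'o::wellorder"
  obtains "\<forall>\<beta>. \<not> \<beta> < \<alpha>" | \<beta> where "is_succ_of \<beta> \<alpha>" | "is_limit \<alpha>"
  unfolding is_limit_def by blast

context
  fixes A :: "'o::wellorder \<Rightarrow> nat \<Rightarrow> 'o set"
  assumes approx: "approximating_family A"
begin

lemma approximating_family_finite: "is_limit \<alpha> \<Longrightarrow> finite (A \<alpha> n)"
  using approx unfolding approximating_family_def by blast

lemma approximating_family_less: "is_limit \<alpha> \<Longrightarrow> \<beta> \<in> A \<alpha> n \<Longrightarrow> \<beta> < \<alpha>"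
  using approx unfolding approximating_family_def by blast

lemma approximating_family_mono: "is_limit \<alpha> \<Longrightarrow> n \<le> m \<Longrightarrow> A \<alpha> n \<subseteq> A \<alpha> m"
  using approx lift_Suc_mono_le[of "A \<alpha>"] unfolding approximating_family_def by blast

lemma approximating_family_cofinal:
  assumes "is_limit \<alpha>" "\<beta> < \<alpha>"
  obtains n where "Max (A \<alpha> n) \<in> A \<alpha> n" "\<beta> < Max (A \<alpha> n)"
proof -
  obtain n where "\<beta> < Max (A \<alpha> n)"
    using approx assms unfolding approximating_family_def by blast
  moreover have "Max (A \<alpha> n) \<in> A \<alpha> n"
    using approx assms(1) unfolding approximating_family_def by simp
  ultimately show thesis using that by blast
qed

end

definition transfinite_step ::
    "('o::wellorder \<Rightarrow> nat \<Rightarrow> 'o set) \<Rightarrow> ('o \<Rightarrow> nat set set) \<Rightarrow> 'o \<Rightarrow> nat set set" where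
  "transfinite_step A F \<alpha> = (if \<not> (\<exists>\<beta>. \<beta> < \<alpha>) then {{}}
     else if (\<exists>\<beta>. is_succ_of \<beta> \<alpha>)
       then {insert n E | n E. E \<in> F (THE \<beta>. is_succ_of \<beta> \<alpha>)} \<union> {{}}
     else {{}} \<union> {E. E \<noteq> {} \<and> E \<in> (\<Union>\<beta>\<in>A \<alpha> (Min E). F \<beta>)})"

lemma adm_wf_transfinite_step:
  fixes A :: "'o::wellorder \<Rightarrow> nat \<Rightarrow> 'o set"
  assumes "approximating_family A"
  shows "adm_wf {(x, y). x < y} (transfinite_step A)"
  unfolding adm_wf_def
proof (intro allI impI)
  fix F G :: "'o \<Rightarrow> nat set set" and \<alpha>
  assume agree: "\<forall>\<beta>. (\<beta>, \<alpha>) \<in> {(x, y). x < y} \<longrightarrow> F \<beta> = G \<beta>"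
  consider "\<forall>\<beta>. \<not> \<beta> < \<alpha>" | \<beta> where "is_succ_of \<beta> \<alpha>" | "is_limit \<alpha>"
    by (rule ordinal_cases)
  then show "transfinite_step A F \<alpha> = transfinite_step A G \<alpha>"
  proof cases
    case (2 \<beta>)
    then have "\<beta> < \<alpha>" by (simp add: is_succ_of_def)
    then show ?thesis using 2 agree by (auto simp: transfinite_step_def the_succ_of)
  next
    case 3
    then have "(\<Union>\<beta>\<in>A \<alpha> n. F \<beta>) = (\<Union>\<beta>\<in>A \<alpha> n. G \<beta>)" for n
      using agree approximating_family_less[OF assms] by (intro SUP_cong) auto
    then show ?thesis using 3 by (simp add: transfinite_step_def is_limit_def)
  qed (simp add: transfinite_step_def)
qed

lemma transfinite_family_unfold:
  assumes "approximating_family A"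
  shows "transfinite_family A \<alpha> = transfinite_step A (transfinite_family A) \<alpha>"
proof -
  have "transfinite_family A = wfrec {(x, y). x < y} (transfinite_step A)"
    unfolding transfinite_family_def transfinite_step_def ..
  then show ?thesis
    using wfrec_fixpoint[OF wf adm_wf_transfinite_step[OF assms]] by simp
qed

context
  fixes A :: "'o::wellorder \<Rightarrow> nat \<Rightarrow> 'o set"
  assumes approx: "approximating_family A"
begin

lemma transfinite_family_bot: "\<forall>\<beta>. \<not> \<beta> < \<alpha> \<Longrightarrow> transfinite_family A \<alpha> = {{}}"
  by (subst transfinite_family_unfold[OF approx]) (simp add: transfinite_step_def)

lemma transfinite_family_succ:
  assumes "is_succ_of \<beta> \<alpha>"
  shows "transfinite_family A \<alpha> = {insert n E | n E. E \<in> transfinite_family A \<beta>} \<union> {{}}"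
proof -
  have "\<beta> < \<alpha>" using assms by (simp add: is_succ_of_def)
  then show ?thesis using assms by (subst transfinite_family_unfold[OF approx])
    (auto simp: transfinite_step_def the_succ_of)
qed

lemma transfinite_family_limit:
  assumes "is_limit \<alpha>"
  shows "transfinite_family A \<alpha> =
    {{}} \<union> {E. E \<noteq> {} \<and> (\<exists>\<beta>\<in>A \<alpha> (Min E). E \<in> transfinite_family A \<beta>)}"
  using assms by (subst transfinite_family_unfold[OF approx])
    (auto simp: transfinite_step_def is_limit_def)

lemma empty_in_transfinite_family: "{} \<in> transfinite_family A \<alpha>"
  by (subst transfinite_family_unfold[OF approx]) (simp add: transfinite_step_def)

lemma transfinite_family_succ_mono:
  assumes "is_succ_of \<beta> \<alpha>"
  shows "transfinite_family A \<beta> \<subseteq> transfinite_family A \<alpha>"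
proof
  fix E assume E: "E \<in> transfinite_family A \<beta>"
  show "E \<in> transfinite_family A \<alpha>"
  proof (cases "E = {}")
    case False
    then obtain n where "E = insert n E" by blast
    with E show ?thesis by (auto simp: transfinite_family_succ[OF assms])
  qed (simp add: empty_in_transfinite_family)
qed

lemma finite_of_in_transfinite_family: "E \<in> transfinite_family A \<alpha> \<Longrightarrow> finite E"
proof (induction \<alpha> arbitrary: E rule: less_induct)
  case (less \<alpha>)
  consider "\<forall>\<beta>. \<not> \<beta> < \<alpha>" | \<beta> where "is_succ_of \<beta> \<alpha>" | "is_limit \<alpha>"
    by (rule ordinal_cases)
  then show ?case
  proof cases
    case 1
    then show ?thesis using less.prems by (simp add: transfinite_family_bot)
  next
    case (2 \<beta>)
    then have "\<beta> < \<alpha>" by (simp add: is_succ_of_def)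
    then show ?thesis using less by (auto simp: transfinite_family_succ[OF 2])
  next
    case 3
    then show ?thesis using less approximating_family_less[OF approx 3]
      by (auto simp: transfinite_family_limit[OF 3])
  qed
qed

end

subsection \<open>Domination of one transfinite family by another\<close>

definition maps_above_into :: "(nat \<Rightarrow> nat) \<Rightarrow> nat set set \<Rightarrow> nat set set \<Rightarrow> bool" where
  "maps_above_into g \<G> \<F> \<longleftrightarrow> (\<forall>E\<in>\<G>. \<forall>f. (\<forall>x\<in>E. g x \<le> f x) \<longrightarrow> f ` E \<in> \<F>)"

lemma maps_above_into_mono:
  "maps_above_into g \<G> \<F> \<Longrightarrow> \<G>' \<subseteq> \<G> \<Longrightarrow> \<F> \<subseteq> \<F>' \<Longrightarrow> maps_above_into g \<G>' \<F>'"
  unfolding maps_above_into_def by blast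

lemma maps_above_into_insert:
  assumes "maps_above_into g \<G> \<F>"
  shows "maps_above_into g ({insert n E | n E. E \<in> \<G>} \<union> {{}}) ({insert n E | n E. E \<in> \<F>} \<union> {{}})"
  unfolding maps_above_into_def
proof (intro ballI allI impI)
  fix E f assume "E \<in> {insert n E | n E. E \<in> \<G>} \<union> {{}}" and f: "\<forall>x\<in>E. g x \<le> f x"
  then consider "E = {}" | n E' where "E = insert n E'" "E' \<in> \<G>"
    by blast
  then show "f ` E \<in> {insert n E | n E. E \<in> \<F>} \<union> {{}}"
  proof cases
    case (2 n E')
    then have "f ` E' \<in> \<F>" using assms f unfolding maps_above_into_def by blast
    then show ?thesis using 2 by auto
  qed simp
qed

context
  fixes A :: "'o::wellorder \<Rightarrow> nat \<Rightarrow> 'o set"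
  assumes approx: "approximating_family A"
begin

lemma maps_above_into_limit_from_approximant:
  assumes lim: "is_limit \<gamma>" and "\<epsilon> \<in> A \<gamma> n"
    and g: "maps_above_into g \<G> (transfinite_family A \<epsilon>)" and fin: "\<forall>E\<in>\<G>. finite E"
  shows "maps_above_into (\<lambda>x. max n (g x)) \<G> (transfinite_family A \<gamma>)"
  unfolding maps_above_into_def
proof (intro ballI allI impI)
  fix E f assume E: "E \<in> \<G>" and f: "\<forall>x\<in>E. max n (g x) \<le> f x"
  have in_\<epsilon>: "f ` E \<in> transfinite_family A \<epsilon>"
    using g E f unfolding maps_above_into_def by auto
  show "f ` E \<in> transfinite_family A \<gamma>"
  proof (cases "E = {}")
    case False
    then have "n \<le> Min (f ` E)" using f fin E by auto
    then have "\<epsilon> \<in> A \<gamma> (Min (f ` E))"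
      using approximating_family_mono[OF approx lim] \<open>\<epsilon> \<in> A \<gamma> n\<close> by blast
    then show ?thesis using in_\<epsilon> False by (subst transfinite_family_limit[OF approx lim]) auto
  qed (simp add: empty_in_transfinite_family[OF approx])
qed

lemma maps_above_into_limit_diagonal:
  assumes lim: "is_limit \<gamma>" and "{} \<in> \<F>"
    and g: "\<And>\<delta>. \<delta> < \<gamma> \<Longrightarrow> maps_above_into (g \<delta>) (transfinite_family A \<delta>) \<F>"
  shows "maps_above_into (\<lambda>x. Max ((\<lambda>\<delta>. g \<delta> x) ` A \<gamma> x)) (transfinite_family A \<gamma>) \<F>"
  unfolding maps_above_into_def
proof (intro ballI allI impI)
  fix E f assume E: "E \<in> transfinite_family A \<gamma>"
    and f: "\<forall>x\<in>E. Max ((\<lambda>\<delta>. g \<delta> x) ` A \<gamma> x) \<le> f x"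
  show "f ` E \<in> \<F>"
  proof (cases "E = {}")
    case False
    then obtain \<delta> where \<delta>: "\<delta> \<in> A \<gamma> (Min E)" "E \<in> transfinite_family A \<delta>"
      using E unfolding transfinite_family_limit[OF approx lim] by blast
    have fin: "finite E" using E by (rule finite_of_in_transfinite_family[OF approx])
    have "g \<delta> x \<le> f x" if "x \<in> E" for x
    proof -
      have "Min E \<le> x" using fin that by simp
      then have "\<delta> \<in> A \<gamma> x" using approximating_family_mono[OF approx lim] \<delta>(1) by blast
      then have "g \<delta> x \<le> Max ((\<lambda>\<delta>. g \<delta> x) ` A \<gamma> x)"
        using approximating_family_finite[OF approx lim] by simp
      then show ?thesis using f that by (meson le_trans)
    qed
    then show ?thesis
      using g[OF approximating_family_less[OF approx lim \<delta>(1)]] \<delta>(2)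
      unfolding maps_above_into_def by blast
  qed (simp add: \<open>{} \<in> \<F>\<close>)
qed

end

lemma maps_above_into_succ_step:
  fixes A B :: "'o::wellorder \<Rightarrow> nat \<Rightarrow> 'o set"
  assumes A: "approximating_family A" and B: "approximating_family B"
    and succ: "is_succ_of \<gamma>' \<gamma>" and "\<beta> \<le> \<gamma>"
    and IH: "\<And>\<beta>. \<beta> \<le> \<gamma>' \<Longrightarrow>
      \<exists>g. maps_above_into g (transfinite_family B \<beta>) (transfinite_family A \<gamma>')"
  shows "\<exists>g. maps_above_into g (transfinite_family B \<beta>) (transfinite_family A \<gamma>)"
proof -
  from succ \<open>\<beta> \<le> \<gamma>\<close> consider "\<beta> \<le> \<gamma>'" | "\<beta> = \<gamma>"
    unfolding is_succ_of_def by (metis antisym not_le)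
  then show ?thesis
  proof cases
    case 1
    then show ?thesis
      using IH transfinite_family_succ_mono[OF A succ] by (meson maps_above_into_mono order_refl)
  next
    case 2
    obtain g where "maps_above_into g (transfinite_family B \<gamma>') (transfinite_family A \<gamma>')"
      using IH[OF order_refl] ..
    then have "maps_above_into g (transfinite_family B \<gamma>) (transfinite_family A \<gamma>)"
      unfolding transfinite_family_succ[OF A succ] transfinite_family_succ[OF B succ]
      by (rule maps_above_into_insert)
    with 2 show ?thesis by blast
  qed
qed

lemma maps_above_into_limit_step:
  fixes A B :: "'o::wellorder \<Rightarrow> nat \<Rightarrow> 'o set"
  assumes A: "approximating_family A" and B: "approximating_family B"
    and lim: "is_limit \<gamma>" and "\<beta> \<le> \<gamma>"
    and IH: "\<And>\<epsilon> \<beta>. \<epsilon> < \<gamma> \<Longrightarrow> \<beta> \<le> \<epsilon> \<Longrightarrow>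
      \<exists>g. maps_above_into g (transfinite_family B \<beta>) (transfinite_family A \<epsilon>)"
  shows "\<exists>g. maps_above_into g (transfinite_family B \<beta>) (transfinite_family A \<gamma>)"
proof -
  have below: "\<exists>g. maps_above_into g (transfinite_family B \<delta>) (transfinite_family A \<gamma>)"
    if "\<delta> < \<gamma>" for \<delta>
  proof -
    obtain n where n: "Max (A \<gamma> n) \<in> A \<gamma> n" "\<delta> < Max (A \<gamma> n)"
      using approximating_family_cofinal[OF A lim \<open>\<delta> < \<gamma>\<close>] .
    obtain g where "maps_above_into g (transfinite_family B \<delta>) (transfinite_family A (Max (A \<gamma> n)))"
      using IH[OF approximating_family_less[OF A lim n(1)]] n(2) by fastforce
    then show ?thesis
      using maps_above_into_limit_from_approximant[OF A lim n(1)]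
        finite_of_in_transfinite_family[OF B] by blast
  qed
  show ?thesis
  proof (cases "\<beta> < \<gamma>")
    case False
    then have "\<beta> = \<gamma>" using \<open>\<beta> \<le> \<gamma>\<close> by simp
    obtain g where "\<And>\<delta>. \<delta> < \<gamma> \<Longrightarrow>
        maps_above_into (g \<delta>) (transfinite_family B \<delta>) (transfinite_family A \<gamma>)"
      using below by metis
    then show ?thesis
      using maps_above_into_limit_diagonal[OF B lim empty_in_transfinite_family[OF A]] \<open>\<beta> = \<gamma>\<close>
      by blast
  qed (rule below)
qed

theorem transfinite_family_maps_above_into:
  fixes A B :: "'o::wellorder \<Rightarrow> nat \<Rightarrow> 'o set"
  assumes A: "approximating_family A" and B: "approximating_family B" and "\<beta> \<le> \<gamma>"
  shows "\<exists>g. maps_above_into g (transfinite_family B \<beta>) (transfinite_family A \<gamma>)"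
  using \<open>\<beta> \<le> \<gamma>\<close>
proof (induction \<gamma> arbitrary: \<beta> rule: less_induct)
  case (less \<gamma>)
  consider "\<forall>\<beta>. \<not> \<beta> < \<gamma>" | \<gamma>' where "is_succ_of \<gamma>' \<gamma>" | "is_limit \<gamma>"
    by (rule ordinal_cases)
  then show ?case
  proof cases
    case 1
    then have "transfinite_family B \<beta> = {{}}"
      using less.prems by (metis transfinite_family_bot[OF B] order.not_eq_order_implies_strict)
    then show ?thesis
      by (auto simp: maps_above_into_def empty_in_transfinite_family[OF A])
  next
    case (2 \<gamma>')
    then have "\<gamma>' < \<gamma>" by (simp add: is_succ_of_def)
    with 2 show ?thesis
      using maps_above_into_succ_step[OF A B 2 less.prems] less.IH by blast
  next
    case 3
    then show ?thesis using maps_above_into_limit_step[OF A B 3 less.prems less.IH] by blast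
  qed
qed

subsection \<open>Transfer of largeness\<close>

lemma strict_mono_majorant:
  fixes g :: "nat \<Rightarrow> nat"
  obtains h where "strict_mono h" "\<And>x. g x \<le> h x"
proof
  show "strict_mono (\<lambda>n. (\<Sum>i\<le>n. g i) + n)"
    unfolding strict_mono_Suc_iff by simp
  show "g x \<le> (\<Sum>i\<le>x. g i) + x" for x
    using member_le_sum[of x "{..x}" g] by simp
qed

lemma enumerate_range_strict_mono:
  fixes k :: "nat \<Rightarrow> nat"
  assumes "strict_mono k"
  shows "enumerate (range k) = k"
proof
  fix n show "enumerate (range k) n = k n"
  proof (induction n)
    case 0
    show ?case unfolding enumerate_0
      by (rule Least_equality) (auto simp: strict_mono_less_eq[OF assms])
  next
    case (Suc n)
    have "infinite (range k)"
      using assms strict_mono_imp_inj_on finite_imageD by blast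
    show ?case unfolding enumerate_Suc''[OF \<open>infinite (range k)\<close>] Suc
      by (rule Least_equality)
        (auto simp: strict_mono_less[OF assms] strict_mono_less_eq[OF assms] Suc_le_eq)
  qed
qed

lemma large_if_maps_above_into:
  assumes "maps_above_into g (\<G> \<alpha>) (\<F> \<alpha>)" and "large \<F> \<alpha> P \<A>"
  shows "large \<G> \<alpha> P \<A>"
  unfolding large_def
proof (intro allI impI)
  fix M assume "M \<subseteq> P \<and> infinite M"
  then obtain N where N: "N \<subseteq> M" "infinite N" "spread N (\<F> \<alpha>) \<subseteq> \<A>"
    using assms(2) unfolding large_def by (metis (no_types, lifting))
  obtain h where h: "strict_mono h" "\<And>x. g x \<le> h x"
    using strict_mono_majorant[of g] by blast
  have k: "strict_mono (enumerate N \<circ> h)"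
    using h(1) strict_mono_enumerate[OF N(2)] by (simp add: strict_mono_def)
  define N' where "N' = range (enumerate N \<circ> h)"
  have "N' \<subseteq> M" unfolding N'_def using N(1) enumerate_in_set[OF N(2)] by auto
  moreover have "infinite N'"
    unfolding N'_def using k strict_mono_imp_inj_on finite_imageD by blast
  moreover have "spread N' (\<G> \<alpha>) \<subseteq> spread N (\<F> \<alpha>)"
  proof -
    have "spread N' (\<G> \<alpha>) = spread N ((\<lambda>E. h ` E) ` \<G> \<alpha>)"
      unfolding spread_def N'_def enumerate_range_strict_mono[OF k] by (simp add: image_comp)
    also have "\<dots> \<subseteq> spread N (\<F> \<alpha>)"
      using assms(1) h(2) unfolding spread_def maps_above_into_def by blast
    finally show ?thesis .
  qed
  ultimately show "\<exists>N'. N' \<subseteq> M \<and> infinite N' \<and> spread N' (\<G> \<alpha>) \<subseteq> \<A>"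
    using N(3) by blast
qed

theorem corollary4p3:
  fixes A B :: "'o::wellorder \<Rightarrow> nat \<Rightarrow> 'o set"
    and \<A> :: "nat set set" and P :: "nat set" and \<alpha> :: 'o
  assumes countable_ordinals: "\<forall>a::'o. countable {b. b < a}"
    and "approximating_family A" and "approximating_family B"
    and "\<forall>E\<in>\<A>. finite E" and "hereditary \<A>"
    and "infinite P"
  shows "large (transfinite_family A) \<alpha> P \<A> \<longleftrightarrow> large (transfinite_family B) \<alpha> P \<A>"
proof
  obtain g where "maps_above_into g (transfinite_family B \<alpha>) (transfinite_family A \<alpha>)"
    using transfinite_family_maps_above_into[OF assms(2,3) order_refl] ..
  then show "large (transfinite_family A) \<alpha> P \<A> \<Longrightarrow> large (transfinite_family B) \<alpha> P \<A>"
    by (rule large_if_maps_above_into)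
next
  obtain g where "maps_above_into g (transfinite_family A \<alpha>) (transfinite_family B \<alpha>)"
    using transfinite_family_maps_above_into[OF assms(3,2) order_refl] ..
  then show "large (transfinite_family B) \<alpha> P \<A> \<Longrightarrow> large (transfinite_family A) \<alpha> P \<A>"
    by (rule large_if_maps_above_into)
qed

end
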